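(* Let $G$ be a finitely generated virtually nilpotent group, $A\le\operatorname{Aut}(G)$ with $|A|=n$, and let $X=(G,A)$ be the $n$-valued coset group. Then for every $z\in X$ and every $y\in X$ the growth function $\xi_y(r)$ of the $n$-valued dynamic $T_z$ at $y$ has polynomial growth, i.e. there are $C,k>0$ with $\xi_y(r)\le Cr^k$ for all $r\ge1$.
   Context: An $n$-valued group is a set $X$ with an associative $n$-valued multiplication $*:X\times X\to\operatorname{Sym}^nX$ (values are $n$-multi-sets), with unit and inverse, as in Buchstaber's definition; multiplication is extended to multi-sets elementwise with multiplicities. Coset group: for a group $G$ and finite $A\le\operatorname{Aut}(G)$ with $|A|=n$, $X=G/A$ is the set of $A$-orbits with projection $\pi$, and $\pi(g)*\pi(h)=[\pi(g\,a(h)):a\in A]$, unit $\pi(e_G)$, $\operatorname{inv}(\pi(g))=\pi(g^{-1})$. For $z\in X$ the $n$-valued dynamic $T_z$ is $T_z(y)=y*z$, iterated by $T_z^k(y)=T_z^{k-1}(y)*z$. For a multi-set $M$, $\operatorname{Set}(M)$ is the set of distinct elements of $M$. The growth function of $T_z$ at $y$ is $\xi_y(r)=|\operatorname{Set}(T_z^r(y))|$. A group is virtually nilpotent if it has a nilpotent subgroup of finite index. *)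

theory Defs
  imports "HOL-Algebra.Algebra" "HOL-Library.Multiset"
begin

definition fin_gen_group :: "('a, 'b) monoid_scheme \<Rightarrow> bool" where
  "fin_gen_group G \<longleftrightarrow> (\<exists>S. finite S \<and> S \<subseteq> carrier G \<and> generate G S = carrier G)"

fun lower_central :: "('a, 'b) monoid_scheme \<Rightarrow> nat \<Rightarrow> 'a set" where
  "lower_central G 0 = carrier G"
| "lower_central G (Suc i) =
     generate G {x \<otimes>\<^bsub>G\<^esub> y \<otimes>\<^bsub>G\<^esub> inv\<^bsub>G\<^esub> x \<otimes>\<^bsub>G\<^esub> inv\<^bsub>G\<^esub> y |
                 x y. x \<in> lower_central G i \<and> y \<in> carrier G}"

definition nilpotent_group :: "('a, 'b) monoid_scheme \<Rightarrow> bool" where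
  "nilpotent_group G \<longleftrightarrow> group G \<and> (\<exists>c. lower_central G c = {\<one>\<^bsub>G\<^esub>})"

definition virtually_nilpotent :: "('a, 'b) monoid_scheme \<Rightarrow> bool" where
  "virtually_nilpotent G \<longleftrightarrow>
     (\<exists>H. subgroup H G \<and> finite (rcosets\<^bsub>G\<^esub> H) \<and> nilpotent_group (G\<lparr>carrier := H\<rparr>))"

text \<open>The A-orbit of g, i.e. the projection pi(g).\<close>
definition orb :: "('a \<Rightarrow> 'a) set \<Rightarrow> 'a \<Rightarrow> 'a set" where
  "orb A g = (\<lambda>a. a g) ` A"

definition coset_space :: "('a, 'b) monoid_scheme \<Rightarrow> ('a \<Rightarrow> 'a) set \<Rightarrow> 'a set set" where
  "coset_space G A = orb A ` carrier G"

definition cmult :: "('a, 'b) monoid_scheme \<Rightarrow> ('a \<Rightarrow> 'a) set \<Rightarrow> 'a set \<Rightarrow> 'a set \<Rightarrow> 'a set multiset" where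
  "cmult G A x w =
     (let g = (SOME g. g \<in> carrier G \<and> orb A g = x);
          h = (SOME h. h \<in> carrier G \<and> orb A h = w)
      in image_mset (\<lambda>a. orb A (g \<otimes>\<^bsub>G\<^esub> a h)) (mset_set A))"

definition cmult_mset :: "('a, 'b) monoid_scheme \<Rightarrow> ('a \<Rightarrow> 'a) set \<Rightarrow> 'a set multiset \<Rightarrow> 'a set \<Rightarrow> 'a set multiset" where
  "cmult_mset G A M w = sum_mset (image_mset (\<lambda>x. cmult G A x w) M)"

fun dyn_iter :: "('a, 'b) monoid_scheme \<Rightarrow> ('a \<Rightarrow> 'a) set \<Rightarrow> 'a set \<Rightarrow> nat \<Rightarrow> 'a set \<Rightarrow> 'a set multiset" where
  "dyn_iter G A z 0 y = {#y#}"
| "dyn_iter G A z (Suc k) y = cmult_mset G A (dyn_iter G A z k y) z"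

definition growth :: "('a, 'b) monoid_scheme \<Rightarrow> ('a \<Rightarrow> 'a) set \<Rightarrow> 'a set \<Rightarrow> 'a set \<Rightarrow> nat \<Rightarrow> nat" where
  "growth G A z y r = card (set_mset (dyn_iter G A z r y))"

end

(*
  Let h represent z. Every value of the r-th iterate of T_z at pi(y0) is pi(y0 s_1 ... s_r) with
  all s_i in the finite orbit z = A h, so xi_y(r) is at most the number of products of r elements
  of z, and it suffices that such products grow polynomially in a virtually nilpotent group.
  For a finite right transversal T of a nilpotent subgroup H of finite index, a product of r
  elements of S is a product of r elements of the finite set T S T^-1 \<inter> H times an element
  of T. In a nilpotent group of class c, Hall's collection process rewrites a product of r letters
  as t_1^a_1 ... t_m^a_m, where t_1, ..., t_m are the iterated commutators of the letters of weight
  below c, ordered by weight, and every exponent a_i is bounded by a polynomial in r.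
*)

theory Submission
  imports Defs
begin

section \<open>Commutators and the lower central series\<close>

definition comm :: "('a, 'b) monoid_scheme \<Rightarrow> 'a \<Rightarrow> 'a \<Rightarrow> 'a" where
  "comm G x g = inv\<^bsub>G\<^esub> x \<otimes>\<^bsub>G\<^esub> inv\<^bsub>G\<^esub> g \<otimes>\<^bsub>G\<^esub> x \<otimes>\<^bsub>G\<^esub> g"

declare lower_central.simps(2)[simp del]

context group
begin

lemma mult_inv_cancel_left: "x \<in> carrier G \<Longrightarrow> y \<in> carrier G \<Longrightarrow> x \<otimes> (inv x \<otimes> y) = y"
  by (simp flip: m_assoc)

lemma inv_mult_cancel_left: "x \<in> carrier G \<Longrightarrow> y \<in> carrier G \<Longrightarrow> inv x \<otimes> (x \<otimes> y) = y"
  by (simp flip: m_assoc)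

lemma subgroup_lower_central: "subgroup (lower_central G h) G"
proof (induction h)
  case 0
  then show ?case by (simp add: subgroup_self)
next
  case (Suc h)
  then show ?case
    unfolding lower_central.simps(2) using subgroup.mem_carrier
    by (intro generate_is_subgroup) fastforce
qed

lemma lower_central_carrier: "x \<in> lower_central G h \<Longrightarrow> x \<in> carrier G"
  using subgroup.mem_carrier[OF subgroup_lower_central] .

lemma lower_central_trivial_mono:
  assumes "lower_central G c = {\<one>}" and "c \<le> h"
  shows "lower_central G h = {\<one>}"
  using assms(2)
proof (induction h rule: dec_induct)
  case base
  then show ?case using assms(1) .
next
  case (step h)
  then have "{x \<otimes> y \<otimes> inv x \<otimes> inv y |x y. x \<in> lower_central G h \<and> y \<in> carrier G} = {\<one>}"
    by force
  then show ?case by (simp add: lower_central.simps(2) generate_one)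
qed

lemma comm_closed: "x \<in> carrier G \<Longrightarrow> g \<in> carrier G \<Longrightarrow> comm G x g \<in> carrier G"
  by (simp add: comm_def)

lemma mult_comm_conj: "x \<in> carrier G \<Longrightarrow> g \<in> carrier G \<Longrightarrow> x \<otimes> comm G x g = inv g \<otimes> x \<otimes> g"
  by (simp add: comm_def m_assoc flip: m_assoc[of x "inv x"])

lemma comm_in_lower_central:
  assumes x: "x \<in> lower_central G h" and g: "g \<in> carrier G"
  shows "comm G x g \<in> lower_central G (Suc h)"
proof -
  have "inv x \<in> lower_central G h"
    using x subgroup.m_inv_closed[OF subgroup_lower_central] by blast
  moreover have "comm G x g = inv x \<otimes> inv g \<otimes> inv (inv x) \<otimes> inv (inv g)"
    using x g by (simp add: comm_def lower_central_carrier)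
  ultimately show ?thesis
    unfolding lower_central.simps(2) using g by (blast intro: generate.incl)
qed

end

section \<open>The collection process in nilpotent groups\<close>

fun iter_comms :: "('a, 'b) monoid_scheme \<Rightarrow> 'a set \<Rightarrow> nat \<Rightarrow> 'a set" where
  "iter_comms G S 0 = S"
| "iter_comms G S (Suc h) =
     iter_comms G S h \<union> {comm G x y | x y. x \<in> iter_comms G S h \<and> y \<in> iter_comms G S h}"

lemma iter_comms_mono: "h \<le> h' \<Longrightarrow> iter_comms G S h \<subseteq> iter_comms G S h'"
  by (induction h' rule: dec_induct) auto

lemma finite_iter_comms: "finite S \<Longrightarrow> finite (iter_comms G S h)"
  by (induction h) (auto intro: finite_image_set2)

definition word_prod :: "('a, 'b) monoid_scheme \<Rightarrow> (nat \<times> 'a) list \<Rightarrow> 'a" where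
  "word_prod G u = foldr (\<otimes>\<^bsub>G\<^esub>) (map snd u) \<one>\<^bsub>G\<^esub>"

lemma word_prod_Nil [simp]: "word_prod G [] = \<one>\<^bsub>G\<^esub>"
  by (simp add: word_prod_def)

lemma word_prod_Cons [simp]: "word_prod G (l # u) = snd l \<otimes>\<^bsub>G\<^esub> word_prod G u"
  by (simp add: word_prod_def)

text \<open>Conjugation by \<open>g\<close>, letter by letter, via \<open>x\<^sup>g = x [x, g]\<close>; commutator letters of
  weight \<open>c\<close> are trivial in a group of class \<open>c\<close> and are dropped.\<close>

definition conj_word :: "('a, 'b) monoid_scheme \<Rightarrow> nat \<Rightarrow> 'a \<Rightarrow> (nat \<times> 'a) list \<Rightarrow> (nat \<times> 'a) list" where
  "conj_word G c g u =
     concat (map (\<lambda>(h, x). if Suc h < c then [(h, x), (Suc h, comm G x g)] else [(h, x)]) u)"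

lemma conj_word_Nil [simp]: "conj_word G c g [] = []"
  by (simp add: conj_word_def)

lemma conj_word_Cons:
  "conj_word G c g ((h, x) # u) =
     (if Suc h < c then [(h, x), (Suc h, comm G x g)] else [(h, x)]) @ conj_word G c g u"
  by (simp add: conj_word_def)

lemma conj_word_pow_append:
  "(conj_word G c g ^^ j) (u @ w) = (conj_word G c g ^^ j) u @ (conj_word G c g ^^ j) w"
  by (induction j) (auto simp: conj_word_def)

lemma conj_word_pow_Suc: "(conj_word G c g ^^ Suc j) u = (conj_word G c g ^^ j) (conj_word G c g u)"
  by (simp only: funpow_Suc_right o_apply)

lemma length_conj_word_pow: "length ((conj_word G c g ^^ j) [(h, x)]) \<le> (j + 1) ^ (c - h)"
proof (induction j arbitrary: h x)
  case 0
  then show ?case by simp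
next
  case (Suc j)
  show ?case
  proof (cases "Suc h < c")
    case True
    then obtain m where m: "c - h = Suc m" "c - Suc h = m"
      by (intro that[of "c - Suc h"]) auto
    have "conj_word G c g [(h, x)] = [(h, x)] @ [(Suc h, comm G x g)]"
      using True by (simp add: conj_word_Cons)
    then have "length ((conj_word G c g ^^ Suc j) [(h, x)]) =
        length ((conj_word G c g ^^ j) [(h, x)]) + length ((conj_word G c g ^^ j) [(Suc h, comm G x g)])"
      by (simp only: conj_word_pow_Suc conj_word_pow_append length_append)
    also have "\<dots> \<le> (j + 1) ^ Suc m + (j + 1) ^ m"
      using Suc.IH[of h x] Suc.IH[of "Suc h"] m by (intro add_mono) auto
    also have "\<dots> = (j + 2) * (j + 1) ^ m"
      by simp
    also have "\<dots> \<le> (j + 2) * (j + 2) ^ m"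
      by (intro mult_le_mono2 power_mono) auto
    finally show ?thesis using m by simp
  next
    case False
    then have "conj_word G c g [(h, x)] = [(h, x)]"
      by (simp add: conj_word_Cons)
    then have "length ((conj_word G c g ^^ Suc j) [(h, x)]) = length ((conj_word G c g ^^ j) [(h, x)])"
      by (simp only: conj_word_pow_Suc)
    also have "\<dots> \<le> (j + 1) ^ (c - h)"
      by (rule Suc.IH)
    also have "\<dots> \<le> (Suc j + 1) ^ (c - h)"
      by (intro power_mono) auto
    finally show ?thesis .
  qed
qed

text \<open>Moves all occurrences of the letter \<open>t\<close> to the front of the word, conjugating the
  letters they pass.\<close>

fun collect :: "('a, 'b) monoid_scheme \<Rightarrow> nat \<Rightarrow> nat \<times> 'a \<Rightarrow> (nat \<times> 'a) list \<Rightarrow> nat \<times> (nat \<times> 'a) list" where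
  "collect G c t [] = (0, [])"
| "collect G c t (l # v) = (case collect G c t v of (a, r) \<Rightarrow>
     if l = t then (Suc a, r) else (a, (conj_word G c (snd t) ^^ a) [l] @ r))"

lemma collect_count_le: "collect G c t v = (a, r) \<Longrightarrow> a \<le> length v"
  by (induction v arbitrary: a r) (auto split: prod.splits if_splits)

lemma length_collect: "collect G c t v = (a, r) \<Longrightarrow> length r \<le> length v * (length v + 1) ^ c"
proof (induction v arbitrary: a r)
  case Nil
  then show ?case by simp
next
  case (Cons l v)
  obtain a' r' where ar': "collect G c t v = (a', r')"
    by fastforce
  have IH: "length r' \<le> length v * (length v + 1) ^ c"
    using Cons.IH[OF ar'] .
  have "length r \<le> (a' + 1) ^ c + length r'"
  proof (cases "l = t")
    case False
    obtain h x where l: "l = (h, x)"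
      by fastforce
    have "length ((conj_word G c (snd t) ^^ a') [l]) \<le> (a' + 1) ^ (c - h)"
      unfolding l by (rule length_conj_word_pow)
    also have "\<dots> \<le> (a' + 1) ^ c"
      by (intro power_increasing) auto
    finally show ?thesis
      using Cons.prems ar' False by auto
  qed (use Cons.prems ar' in auto)
  also have "\<dots> \<le> (length v + 1) ^ c + length v * (length v + 1) ^ c"
    using IH collect_count_le[OF ar'] by (intro add_mono power_mono) auto
  also have "\<dots> = (length v + 1) * (length v + 1) ^ c"
    by simp
  also have "\<dots> \<le> length (l # v) * (length (l # v) + 1) ^ c"
    by (intro mult_le_mono power_mono) auto
  finally show ?case .
qed

lemma length_collect_less:
  assumes "collect G c t v = (a, r)" and "length v < L"
  shows "length r < L ^ Suc c"
proof -
  have "(length v + 1) ^ Suc c = (length v + 1) ^ c + length v * (length v + 1) ^ c"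
    by simp
  moreover have "1 \<le> (length v + 1) ^ c"
    by simp
  ultimately have "length r < (length v + 1) ^ Suc c"
    using length_collect[OF assms(1)] by linarith
  also have "\<dots> \<le> L ^ Suc c"
    using assms(2) by (intro power_mono) auto
  finally show ?thesis .
qed

text \<open>A letter \<open>(h, x)\<close> of a word records the weight \<open>h\<close> of the iterated commutator \<open>x\<close>.\<close>

definition valid_letter :: "('a, 'b) monoid_scheme \<Rightarrow> 'a set \<Rightarrow> nat \<times> 'a \<Rightarrow> bool" where
  "valid_letter G S l \<longleftrightarrow> snd l \<in> iter_comms G S (fst l) \<and> snd l \<in> lower_central G (fst l)"

definition collection_basis :: "('a, 'b) monoid_scheme \<Rightarrow> 'a set \<Rightarrow> nat \<Rightarrow> (nat \<times> 'a) list \<Rightarrow> bool" where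
  "collection_basis G S c ts \<longleftrightarrow>
     sorted (map fst ts) \<and> (\<forall>l\<in>set ts. snd l \<in> iter_comms G S (fst l) \<and> fst l < c) \<and>
     (\<forall>l\<in>set ts. \<forall>h e. fst l < h \<and> h < c \<and> e \<in> iter_comms G S h \<longrightarrow> (h, e) \<in> set ts)"

lemma collection_basis_Cons:
  assumes "collection_basis G S c (t # ts)"
  shows "collection_basis G S c ts"
proof -
  have "(h, e) \<in> set ts" if "l \<in> set ts" "fst l < h" "h < c" "e \<in> iter_comms G S h" for l h e
  proof -
    have "fst t \<le> fst l"
      using assms that(1) by (simp add: collection_basis_def)
    then have "(h, e) \<noteq> t"
      using that(2) by auto
    moreover have "(h, e) \<in> set (t # ts)"
      using assms that unfolding collection_basis_def by (meson list.set_intros(2))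
    ultimately show ?thesis by simp
  qed
  then show ?thesis
    using assms unfolding collection_basis_def by auto
qed

lemma exists_collection_basis:
  assumes "finite S"
  shows "\<exists>ts. collection_basis G S c ts \<and> set ts = {(h, e). h < c \<and> e \<in> iter_comms G S h}"
proof -
  have "\<exists>ts. sorted (map fst ts) \<and> set ts = {(h, e). h < c \<and> e \<in> iter_comms G S h}"
  proof (induction c)
    case 0
    then show ?case by simp
  next
    case (Suc c)
    then obtain ts where ts: "sorted (map fst ts)" "set ts = {(h, e). h < c \<and> e \<in> iter_comms G S h}"
      by blast
    obtain es where es: "set es = iter_comms G S c"
      using finite_list[OF finite_iter_comms[OF assms]] by blast
    have "map fst (map (Pair c) es) = replicate (length es) c"
      by (induction es) auto
    then have "sorted (map fst (ts @ map (Pair c) es))"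
      using ts by (auto simp: sorted_append)
    moreover have "set (ts @ map (Pair c) es) = {(h, e). h < Suc c \<and> e \<in> iter_comms G S h}"
      using ts es by (auto simp: less_Suc_eq)
    ultimately show ?case
      by blast
  qed
  then show ?thesis
    unfolding collection_basis_def by fastforce
qed

lemma letters_above_basis_head:
  assumes "collection_basis G S c ((hg, g) # ts)"
    and "\<forall>l\<in>set v. valid_letter G S l \<and> (fst l < c \<longrightarrow> l \<in> set ((hg, g) # ts))"
  shows "\<forall>l\<in>set v. valid_letter G S l \<and> hg \<le> fst l"
proof
  fix l assume l: "l \<in> set v"
  have "hg < c"
    using assms(1) by (simp add: collection_basis_def)
  moreover have "hg \<le> fst l" if "l \<in> set ((hg, g) # ts)"
    using assms(1) that by (auto simp: collection_basis_def)
  ultimately show "valid_letter G S l \<and> hg \<le> fst l"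
    using assms(2) l by (cases "fst l < c") auto
qed

lemma collect_remainder_in_basis:
  assumes basis: "collection_basis G S c ((hg, g) # ts)"
    and v: "\<forall>l\<in>set v. valid_letter G S l \<and> (fst l < c \<longrightarrow> l \<in> set ((hg, g) # ts))"
    and r: "\<forall>l\<in>set r. valid_letter G S l \<and> hg \<le> fst l \<and> (l \<in> set v \<and> l \<noteq> (hg, g) \<or> hg < fst l)"
  shows "\<forall>l\<in>set r. valid_letter G S l \<and> (fst l < c \<longrightarrow> l \<in> set ts)"
proof (intro ballI conjI impI)
  fix l assume l: "l \<in> set r" and lc: "fst l < c"
  then consider "l \<in> set v" "l \<noteq> (hg, g)" | "hg < fst l"
    using r by blast
  then show "l \<in> set ts"
  proof cases
    case 1
    then show ?thesis
      using v lc by auto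
  next
    case 2
      have "snd l \<in> iter_comms G S (fst l)"
      using r l by (simp add: valid_letter_def)
    then have "(fst l, snd l) \<in> set ((hg, g) # ts)"
      using basis 2 lc unfolding collection_basis_def by (metis fst_conv list.set_intros(1))
    then show ?thesis
      using 2 by auto
  qed
qed (use r in blast)

context group
begin

lemma iter_comms_carrier: "S \<subseteq> carrier G \<Longrightarrow> iter_comms G S h \<subseteq> carrier G"
  by (induction h) (auto intro!: comm_closed)

lemma word_prod_closed: "snd ` set u \<subseteq> carrier G \<Longrightarrow> word_prod G u \<in> carrier G"
  unfolding word_prod_def by (intro multlist_closed) auto

lemma word_prod_append:
  "snd ` set u \<subseteq> carrier G \<Longrightarrow> snd ` set w \<subseteq> carrier G \<Longrightarrow>
    word_prod G (u @ w) = word_prod G u \<otimes> word_prod G w"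
  by (induction u) (auto simp: m_assoc word_prod_closed)

lemma prod_conj_word:
  assumes triv: "lower_central G c = {\<one>}" and g: "g \<in> carrier G"
    and u: "\<forall>l\<in>set u. snd l \<in> lower_central G (fst l)"
  shows "word_prod G (conj_word G c g u) = inv g \<otimes> word_prod G u \<otimes> g"
  using u
proof (induction u)
  case Nil
  then show ?case using g by simp
next
  case (Cons l u)
  obtain h x where l: "l = (h, x)"
    by fastforce
  have x: "x \<in> lower_central G h" "x \<in> carrier G"
    using Cons.prems l lower_central_carrier by auto
  have P: "word_prod G u \<in> carrier G"
    using Cons.prems lower_central_carrier by (auto intro: word_prod_closed)
  have IH: "word_prod G (conj_word G c g u) = inv g \<otimes> word_prod G u \<otimes> g"
    using Cons by simp
  show ?case
  proof (cases "Suc h < c")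
    case True
    then have "word_prod G (conj_word G c g (l # u)) = (x \<otimes> comm G x g) \<otimes> (inv g \<otimes> word_prod G u \<otimes> g)"
      using x g P by (simp add: l conj_word_Cons IH comm_closed m_assoc)
    then show ?thesis
      using x g P by (simp add: l mult_comm_conj m_assoc mult_inv_cancel_left)
  next
    case False
    \<comment> \<open>the dropped commutator has weight at least c, so x commutes with g\<close>
    have "comm G x g = \<one>"
      using comm_in_lower_central[OF x(1) g] lower_central_trivial_mono[OF triv] False by auto
    then have "x = inv g \<otimes> x \<otimes> g"
      using mult_comm_conj[OF x(2) g] x by simp
    then have "x \<otimes> (inv g \<otimes> word_prod G u \<otimes> g) = inv g \<otimes> x \<otimes> g \<otimes> (inv g \<otimes> word_prod G u \<otimes> g)"
      by simp
    then show ?thesis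
      using False x g P by (simp add: l conj_word_Cons IH m_assoc mult_inv_cancel_left)
  qed
qed

lemma conj_word_lower_central:
  "g \<in> carrier G \<Longrightarrow> \<forall>l\<in>set u. snd l \<in> lower_central G (fst l) \<Longrightarrow>
    \<forall>l\<in>set (conj_word G c g u). snd l \<in> lower_central G (fst l)"
proof (induction u)
  case (Cons l u)
  then show ?case
    by (cases l) (auto simp: conj_word_Cons intro: comm_in_lower_central)
qed simp

lemma conj_word_pow_lower_central:
  "g \<in> carrier G \<Longrightarrow> \<forall>l\<in>set u. snd l \<in> lower_central G (fst l) \<Longrightarrow>
    \<forall>l\<in>set ((conj_word G c g ^^ a) u). snd l \<in> lower_central G (fst l)"
  by (induction a) (auto simp: conj_word_lower_central)

lemma prod_conj_word_pow:
  assumes triv: "lower_central G c = {\<one>}" and g: "g \<in> carrier G"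
    and u: "\<forall>l\<in>set u. snd l \<in> lower_central G (fst l)"
  shows "word_prod G ((conj_word G c g ^^ a) u) = inv (g [^] a) \<otimes> word_prod G u \<otimes> g [^] a"
proof (induction a)
  case 0
  have "word_prod G u \<in> carrier G"
    using u lower_central_carrier by (auto intro: word_prod_closed)
  then show ?case by simp
next
  case (Suc a)
  have P: "word_prod G u \<in> carrier G"
    using u lower_central_carrier by (auto intro: word_prod_closed)
  have "word_prod G ((conj_word G c g ^^ Suc a) u) = inv g \<otimes> (inv (g [^] a) \<otimes> word_prod G u \<otimes> g [^] a) \<otimes> g"
    using prod_conj_word[OF triv g conj_word_pow_lower_central[OF g u, of a]] Suc by simp
  then show ?case
    using g P by (simp add: inv_mult_group m_assoc)
qed

lemma conj_word_valid:
  assumes S: "S \<subseteq> carrier G" and g: "g \<in> iter_comms G S hg" and hg: "hg \<le> fst l0"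
    and u: "\<forall>l\<in>set u. valid_letter G S l \<and> (l = l0 \<or> fst l0 < fst l)"
  shows "\<forall>l\<in>set (conj_word G c g u). valid_letter G S l \<and> (l = l0 \<or> fst l0 < fst l)"
  using u
proof (induction u)
  case (Cons l u)
  obtain h x where l: "l = (h, x)"
    by fastforce
  have x: "x \<in> iter_comms G S h" "x \<in> lower_central G h" and h: "fst l0 \<le> h"
    using Cons.prems l by (auto simp: valid_letter_def)
  have "g \<in> iter_comms G S h"
    using g iter_comms_mono[of hg h G S] hg h by auto
  then have "valid_letter G S (Suc h, comm G x g)"
    using x g iter_comms_carrier[OF S] by (auto simp: valid_letter_def intro!: comm_in_lower_central)
  then have new: "valid_letter G S (Suc h, comm G x g) \<and> fst l0 < Suc h"
    using h by simp
  have hd: "valid_letter G S l \<and> (l = l0 \<or> fst l0 < fst l)"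
    using Cons.prems by simp
  have tl: "\<forall>l'\<in>set (conj_word G c g u). valid_letter G S l' \<and> (l' = l0 \<or> fst l0 < fst l')"
    using Cons.IH Cons.prems by simp
  show ?case
  proof
    fix l' assume "l' \<in> set (conj_word G c g (l # u))"
    then consider "l' = l" | "l' = (Suc h, comm G x g)" | "l' \<in> set (conj_word G c g u)"
      by (auto simp: l conj_word_Cons split: if_splits)
    then show "valid_letter G S l' \<and> (l' = l0 \<or> fst l0 < fst l')"
      using new hd tl by cases auto
  qed
qed simp

lemma conj_word_pow_valid:
  assumes "S \<subseteq> carrier G" and "g \<in> iter_comms G S hg" and "hg \<le> fst l0" and "valid_letter G S l0"
  shows "\<forall>l\<in>set ((conj_word G c g ^^ a) [l0]). valid_letter G S l \<and> (l = l0 \<or> fst l0 < fst l)"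
proof (induction a)
  case 0
  then show ?case using assms(4) by simp
next
  case (Suc a)
  then show ?case
    unfolding funpow.simps(2) o_apply by (rule conj_word_valid[OF assms(1-3)])
qed

lemma collect_valid:
  assumes S: "S \<subseteq> carrier G" and g: "g \<in> iter_comms G S hg"
  shows "\<forall>l\<in>set v. valid_letter G S l \<and> hg \<le> fst l \<Longrightarrow> collect G c (hg, g) v = (a, r) \<Longrightarrow>
    \<forall>l\<in>set r. valid_letter G S l \<and> hg \<le> fst l \<and> (l \<in> set v \<and> l \<noteq> (hg, g) \<or> hg < fst l)"
proof (induction v arbitrary: a r)
  case (Cons l v)
  obtain a' r' where ar': "collect G c (hg, g) v = (a', r')"
    by fastforce
  have IH: "\<forall>l\<in>set r'. valid_letter G S l \<and> hg \<le> fst l \<and> (l \<in> set v \<and> l \<noteq> (hg, g) \<or> hg < fst l)"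
    using Cons.IH[OF _ ar'] Cons.prems(1) by simp
  show ?case
  proof (cases "l = (hg, g)")
    case True
    then show ?thesis using Cons.prems(2) ar' IH by auto
  next
    case False
    have "valid_letter G S l" "hg \<le> fst l"
      using Cons.prems(1) by auto
    then have "\<forall>l'\<in>set ((conj_word G c g ^^ a') [l]). valid_letter G S l' \<and> (l' = l \<or> fst l < fst l')"
      using conj_word_pow_valid[OF S g] by blast
    moreover have "r = (conj_word G c g ^^ a') [l] @ r'"
      using Cons.prems(2) ar' False by auto
    ultimately show ?thesis
      using IH False \<open>hg \<le> fst l\<close> by auto
  qed
qed simp

lemma collect_lower_central:
  assumes g: "g \<in> carrier G"
  shows "\<forall>l\<in>set v. snd l \<in> lower_central G (fst l) \<Longrightarrow> collect G c (hg, g) v = (a, r) \<Longrightarrow>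
    \<forall>l\<in>set r. snd l \<in> lower_central G (fst l)"
proof (induction v arbitrary: a r)
  case (Cons l v)
  obtain a' r' where ar': "collect G c (hg, g) v = (a', r')"
    by fastforce
  have "\<forall>l\<in>set r'. snd l \<in> lower_central G (fst l)"
    using Cons.IH[OF _ ar'] Cons.prems(1) by simp
  moreover have "\<forall>l'\<in>set ((conj_word G c g ^^ a') [l]). snd l' \<in> lower_central G (fst l')"
    using conj_word_pow_lower_central[OF g, of "[l]" a'] Cons.prems(1) by simp
  moreover have "r = r' \<or> r = (conj_word G c g ^^ a') [l] @ r'"
    using Cons.prems(2) ar' by (auto split: if_splits)
  ultimately show ?case
    by (metis Un_iff set_append)
qed simp

lemma prod_collect:
  assumes triv: "lower_central G c = {\<one>}" and g: "g \<in> carrier G"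
  shows "\<forall>l\<in>set v. snd l \<in> lower_central G (fst l) \<Longrightarrow> collect G c (hg, g) v = (a, r) \<Longrightarrow>
    word_prod G v = g [^] a \<otimes> word_prod G r"
proof (induction v arbitrary: a r)
  case Nil
  then show ?case by simp
next
  case (Cons l v)
  obtain a' r' where ar': "collect G c (hg, g) v = (a', r')"
    by fastforce
  have IH: "word_prod G v = g [^] a' \<otimes> word_prod G r'"
    using Cons.IH[OF _ ar'] Cons.prems(1) by simp
  have l: "snd l \<in> lower_central G (fst l)" "snd l \<in> carrier G"
    using Cons.prems(1) lower_central_carrier by auto
  have r': "snd ` set r' \<subseteq> carrier G"
    using collect_lower_central[OF g _ ar'] Cons.prems(1) lower_central_carrier by fastforce
  then have P: "word_prod G r' \<in> carrier G"
    by (rule word_prod_closed)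
  show ?case
  proof (cases "l = (hg, g)")
    case True
    then have "a = Suc a'" "r = r'"
      using Cons.prems(2) ar' by auto
    then show ?thesis
      unfolding \<open>a = Suc a'\<close> nat_pow_Suc2[OF g] using True IH g P by (simp add: m_assoc)
  next
    case False
    let ?w = "(conj_word G c g ^^ a') [l]"
    have w: "word_prod G ?w = inv (g [^] a') \<otimes> snd l \<otimes> g [^] a'"
      using prod_conj_word_pow[OF triv g, of "[l]" a'] l by simp
    have "snd ` set ?w \<subseteq> carrier G"
      using conj_word_pow_lower_central[OF g, of "[l]" a'] l lower_central_carrier by fastforce
    moreover have "a = a'" "r = ?w @ r'"
      using Cons.prems(2) ar' False by auto
    ultimately have "g [^] a \<otimes> word_prod G r = g [^] a' \<otimes> (inv (g [^] a') \<otimes> snd l \<otimes> g [^] a' \<otimes> word_prod G r')"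
      using w r' by (simp add: word_prod_append)
    also have "\<dots> = word_prod G (l # v)"
      using IH l g P by (simp add: m_assoc mult_inv_cancel_left)
    finally show ?thesis by simp
  qed
qed

text \<open>Collecting the head of the basis raises the length bound \<open>L\<close> of the remaining word
  to \<open>L\<^sup>c\<^sup>+\<^sup>1\<close>, whence the exponent bound.\<close>

lemma collect_exponents:
  assumes triv: "lower_central G c = {\<one>}" and S: "S \<subseteq> carrier G"
  shows "collection_basis G S c ts \<Longrightarrow> \<forall>l\<in>set v. valid_letter G S l \<and> (fst l < c \<longrightarrow> l \<in> set ts) \<Longrightarrow>
    length v < L \<Longrightarrow>
    \<exists>as. length as = length ts \<and> (\<forall>a\<in>set as. a < L ^ ((c + 1) ^ length ts)) \<and>
      word_prod G v = foldr (\<otimes>) (map2 (\<lambda>l a. snd l [^] a) ts as) \<one>"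
proof (induction ts arbitrary: v L)
  case Nil
  then have "\<forall>l\<in>set v. snd l \<in> lower_central G (fst l) \<and> c \<le> fst l"
    by (auto simp: valid_letter_def not_less)
  then have "\<forall>l\<in>set v. snd l = \<one>"
    using lower_central_trivial_mono[OF triv] by blast
  then have "word_prod G v = \<one>"
    by (induction v) auto
  then show ?case by simp
next
  case (Cons t ts)
  obtain hg g where t: "t = (hg, g)"
    by fastforce
  obtain a r where ar: "collect G c (hg, g) v = (a, r)"
    by fastforce
  have g: "g \<in> iter_comms G S hg" "g \<in> carrier G"
    using Cons.prems(1) t S iter_comms_carrier by (auto simp: collection_basis_def)
  have v: "\<forall>l\<in>set v. valid_letter G S l \<and> hg \<le> fst l"
    using letters_above_basis_head Cons.prems(1,2) unfolding t .
  then have prod: "word_prod G v = g [^] a \<otimes> word_prod G r"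
    using prod_collect[OF triv g(2) _ ar] by (simp add: valid_letter_def)
  have "\<forall>l\<in>set r. valid_letter G S l \<and> (fst l < c \<longrightarrow> l \<in> set ts)"
    using collect_remainder_in_basis Cons.prems(1,2) collect_valid[OF S g(1) v ar] unfolding t .
  moreover have "length r < L ^ Suc c"
    using length_collect_less[OF ar Cons.prems(3)] .
  ultimately obtain as where as: "length as = length ts"
    "\<forall>a\<in>set as. a < (L ^ Suc c) ^ ((c + 1) ^ length ts)"
    "word_prod G r = foldr (\<otimes>) (map2 (\<lambda>l a. snd l [^] a) ts as) \<one>"
    using Cons.IH[OF collection_basis_Cons[OF Cons.prems(1)]] by blast
  have "a < L"
    using collect_count_le[OF ar] Cons.prems(3) by simp
  also have "\<dots> \<le> L ^ ((c + 1) ^ length (t # ts))"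
    using \<open>a < L\<close> by (simp add: self_le_power)
  finally have "a < L ^ ((c + 1) ^ length (t # ts))" .
  moreover have "(c + 1) ^ length (t # ts) = Suc c * (c + 1) ^ length ts"
    by simp
  then have "(L ^ Suc c) ^ ((c + 1) ^ length ts) = L ^ ((c + 1) ^ length (t # ts))"
    by (simp only: power_mult)
  ultimately show ?case
    using as prod t by (intro exI[of _ "a # as"]) auto
qed

end

section \<open>Products in virtually nilpotent groups\<close>

definition products :: "('a, 'b) monoid_scheme \<Rightarrow> 'a set \<Rightarrow> nat \<Rightarrow> 'a set" where
  "products G S k = (\<lambda>ws. foldr (\<otimes>\<^bsub>G\<^esub>) ws \<one>\<^bsub>G\<^esub>) ` {ws. set ws \<subseteq> S \<and> length ws = k}"

lemma finite_products: "finite S \<Longrightarrow> finite (products G S k)"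
  by (simp add: products_def finite_lists_length_eq)

lemma products_subgroup [simp]: "products (G\<lparr>carrier := H\<rparr>) S k = products G S k"
  by (simp add: products_def)

context group
begin

lemma nilpotent_card_products_le:
  assumes triv: "lower_central G c = {\<one>}" and S: "S \<subseteq> carrier G" and fin: "finite S"
  shows "\<exists>N. \<forall>k. card (products G S k) \<le> (k + 1) ^ N"
proof -
  obtain ts where basis: "collection_basis G S c ts"
    and ts: "set ts = {(h, e). h < c \<and> e \<in> iter_comms G S h}"
    using exists_collection_basis[OF fin] by blast
  define n where "n = length ts"
  define collected where "collected (as :: nat list) = foldr (\<otimes>) (map2 (\<lambda>l a. snd l [^] a) ts as) \<one>" for as
  have "card (products G S k) \<le> (k + 1) ^ ((c + 1) ^ n * n)" for k
  proof -
    define M where "M = (k + 1) ^ ((c + 1) ^ n)"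
    have "products G S k \<subseteq> collected ` {as. set as \<subseteq> {..<M} \<and> length as = n}"
    proof
      fix p assume "p \<in> products G S k"
      then obtain ws where ws: "set ws \<subseteq> S" "length ws = k" "p = foldr (\<otimes>) ws \<one>"
        unfolding products_def by blast
      have "\<forall>l\<in>set (map (Pair 0) ws). valid_letter G S l \<and> (fst l < c \<longrightarrow> l \<in> set ts)"
        using ws(1) S ts by (auto simp: valid_letter_def)
      moreover have "length (map (Pair 0) ws) < k + 1"
        using ws(2) by simp
      ultimately obtain as where "length as = n" "\<forall>a\<in>set as. a < M"
        "word_prod G (map (Pair 0) ws) = collected as"
        using collect_exponents[OF triv S basis] unfolding n_def M_def collected_def by blast
      moreover have "word_prod G (map (Pair 0) ws) = p"
        using ws(3) by (simp add: word_prod_def comp_def)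
      ultimately show "p \<in> collected ` {as. set as \<subseteq> {..<M} \<and> length as = n}"
        by auto
    qed
    then have "card (products G S k) \<le> card (collected ` {as. set as \<subseteq> {..<M} \<and> length as = n})"
      by (intro card_mono finite_imageI finite_lists_length_eq) auto
    also have "\<dots> \<le> card {as. set as \<subseteq> {..<M} \<and> length as = n}"
      by (intro card_image_le finite_lists_length_eq) auto
    also have "\<dots> = (k + 1) ^ ((c + 1) ^ n * n)"
      by (simp add: card_lists_length_eq M_def power_mult)
    finally show ?thesis .
  qed
  then show ?thesis by blast
qed

lemma finite_transversal:
  assumes H: "subgroup H G" and fin: "finite (rcosets H)"
  shows "\<exists>T. finite T \<and> \<one> \<in> T \<and> T \<subseteq> carrier G \<and> (\<forall>x\<in>carrier G. \<exists>t\<in>T. x \<otimes> inv t \<in> H)"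
proof -
  define T where "T = insert \<one> ((\<lambda>C. SOME y. y \<in> C) ` (rcosets H))"
  have "\<exists>t\<in>T. x \<otimes> inv t \<in> H" if x: "x \<in> carrier G" for x
  proof -
    have "(SOME y. y \<in> H #> x) \<in> H #> x"
      using rcos_self[OF x H] by (rule someI)
    then obtain h where h: "h \<in> H" "(SOME y. y \<in> H #> x) = h \<otimes> x"
      unfolding r_coset_def by blast
    then have "x \<otimes> inv (SOME y. y \<in> H #> x) = inv h"
      using x subgroup.mem_carrier[OF H] by (simp add: inv_mult_group mult_inv_cancel_left flip: m_assoc)
    moreover have "(SOME y. y \<in> H #> x) \<in> T"
      unfolding T_def RCOSETS_def using x by (intro insertI2 image_eqI[of _ _ "H #> x"]) auto
    ultimately show ?thesis
      using h(1) subgroup.m_inv_closed[OF H] by (intro bexI[of _ "SOME y. y \<in> H #> x"]) auto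
  qed
  moreover have "finite T" "\<one> \<in> T"
    using fin by (simp_all add: T_def)
  moreover have "T \<subseteq> carrier G"
  proof -
    have "(SOME y. y \<in> H #> x) \<in> carrier G" if "x \<in> carrier G" for x
      using someI[of "\<lambda>y. y \<in> H #> x", OF rcos_self[OF that H]]
        r_coset_subset_G[OF subgroup.subset[OF H] that] by blast
    then show ?thesis
      unfolding T_def RCOSETS_def by auto
  qed
  ultimately show ?thesis
    by blast
qed

lemma transversal_rewrite:
  assumes T: "T \<subseteq> carrier G" and S: "S \<subseteq> carrier G" and S': "S' \<subseteq> carrier G"
    and closed: "\<forall>t\<in>T. \<forall>s\<in>S. \<exists>u\<in>T. t \<otimes> s \<otimes> inv u \<in> S'"
  shows "set ws \<subseteq> S \<Longrightarrow> t \<in> T \<Longrightarrow>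
    \<exists>ws' t'. set ws' \<subseteq> S' \<and> length ws' = length ws \<and> t' \<in> T \<and>
      t \<otimes> foldr (\<otimes>) ws \<one> = foldr (\<otimes>) ws' \<one> \<otimes> t'"
proof (induction ws arbitrary: t)
  case Nil
  then show ?case
    using T by (intro exI[of _ "[]"] exI[of _ t]) auto
next
  case (Cons s ws)
  then have s: "s \<in> S" and ws: "set ws \<subseteq> S"
    by simp_all
  obtain u where u: "u \<in> T" "t \<otimes> s \<otimes> inv u \<in> S'"
    using closed Cons.prems(2) s by blast
  obtain ws' t' where ws': "set ws' \<subseteq> S'" "length ws' = length ws" "t' \<in> T"
    "u \<otimes> foldr (\<otimes>) ws \<one> = foldr (\<otimes>) ws' \<one> \<otimes> t'"
    using Cons.IH[OF ws u(1)] by blast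
  have carr: "t \<in> carrier G" "s \<in> carrier G" "u \<in> carrier G" "t' \<in> carrier G"
    "foldr (\<otimes>) ws \<one> \<in> carrier G" "foldr (\<otimes>) ws' \<one> \<in> carrier G"
    using Cons.prems(2) s ws u(1) ws'(1,3) T S S' by (auto intro!: multlist_closed)
  have "t \<otimes> foldr (\<otimes>) (s # ws) \<one> = (t \<otimes> s \<otimes> inv u) \<otimes> (u \<otimes> foldr (\<otimes>) ws \<one>)"
    using carr by (simp add: m_assoc inv_mult_cancel_left)
  also have "\<dots> = foldr (\<otimes>) ((t \<otimes> s \<otimes> inv u) # ws') \<one> \<otimes> t'"
    using carr by (simp add: ws'(4) m_assoc)
  finally show ?case
    using ws'(1-3) u(2) by (intro exI[of _ "(t \<otimes> s \<otimes> inv u) # ws'"] exI[of _ t']) simp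
qed

lemma card_products_le_transversal:
  assumes T: "finite T" "\<one> \<in> T" "T \<subseteq> carrier G" and S: "S \<subseteq> carrier G"
    and S': "finite S'" "S' \<subseteq> carrier G"
    and closed: "\<forall>t\<in>T. \<forall>s\<in>S. \<exists>u\<in>T. t \<otimes> s \<otimes> inv u \<in> S'"
  shows "card (products G S k) \<le> card (products G S' k) * card T"
proof -
  have "products G S k \<subseteq> (\<lambda>(p, t). p \<otimes> t) ` (products G S' k \<times> T)"
  proof
    fix p assume "p \<in> products G S k"
    then obtain ws where ws: "set ws \<subseteq> S" "length ws = k" "p = foldr (\<otimes>) ws \<one>"
      unfolding products_def by blast
    obtain ws' t' where ws': "set ws' \<subseteq> S'" "length ws' = length ws" "t' \<in> T"
      "\<one> \<otimes> foldr (\<otimes>) ws \<one> = foldr (\<otimes>) ws' \<one> \<otimes> t'"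
      using transversal_rewrite[OF T(3) S S'(2) closed ws(1) T(2)] by blast
    then have "p = foldr (\<otimes>) ws' \<one> \<otimes> t'"
      using ws S by (simp add: multlist_closed)
    moreover have "foldr (\<otimes>) ws' \<one> \<in> products G S' k"
      using ws'(1,2) ws(2) unfolding products_def by auto
    ultimately show "p \<in> (\<lambda>(p, t). p \<otimes> t) ` (products G S' k \<times> T)"
      using ws'(3) by (intro image_eqI[of _ _ "(foldr (\<otimes>) ws' \<one>, t')"]) auto
  qed
  then have "card (products G S k) \<le> card ((\<lambda>(p, t). p \<otimes> t) ` (products G S' k \<times> T))"
    using finite_products[OF S'(1), of G k] T(1) by (intro card_mono) auto
  also have "\<dots> \<le> card (products G S' k) * card T"
    using finite_products[OF S'(1), of G k] T(1) by (metis card_image_le card_cartesian_product finite_SigmaI)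
  finally show ?thesis .
qed

lemma virtually_nilpotent_card_products_le:
  assumes vn: "virtually_nilpotent G" and S: "S \<subseteq> carrier G" and fin: "finite S"
  shows "\<exists>C N. \<forall>k. card (products G S k) \<le> C * (k + 1) ^ N"
proof -
  obtain H c where H: "subgroup H G" "finite (rcosets H)" and K: "group (G\<lparr>carrier := H\<rparr>)"
    and triv: "lower_central (G\<lparr>carrier := H\<rparr>) c = {\<one>\<^bsub>G\<lparr>carrier := H\<rparr>\<^esub>}"
    using vn unfolding virtually_nilpotent_def nilpotent_group_def by blast
  obtain T where T: "finite T" "\<one> \<in> T" "T \<subseteq> carrier G" "\<forall>x\<in>carrier G. \<exists>t\<in>T. x \<otimes> inv t \<in> H"
    using finite_transversal[OF H] by blast
  define S' where "S' = (\<lambda>(t, s, u). t \<otimes> s \<otimes> inv u) ` (T \<times> S \<times> T) \<inter> H"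
  have S': "finite S'" "S' \<subseteq> H"
    unfolding S'_def using T(1) fin by blast+
  have closed: "\<forall>t\<in>T. \<forall>s\<in>S. \<exists>u\<in>T. t \<otimes> s \<otimes> inv u \<in> S'"
  proof (intro ballI)
    fix t s assume ts: "t \<in> T" "s \<in> S"
    then obtain u where "u \<in> T" "t \<otimes> s \<otimes> inv u \<in> H"
      using T(3,4) S by blast
    then show "\<exists>u\<in>T. t \<otimes> s \<otimes> inv u \<in> S'"
      unfolding S'_def using ts by (intro bexI[of _ u]) force+
  qed
  interpret K: group "G\<lparr>carrier := H\<rparr>"
    by (rule K)
  obtain N where N: "\<forall>k. card (products G S' k) \<le> (k + 1) ^ N"
    using K.nilpotent_card_products_le[OF triv _ S'(1)] S'(2) by auto
  have "S' \<subseteq> carrier G"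
    using S'(2) subgroup.subset[OF H(1)] by blast
  then have "card (products G S k) \<le> card (products G S' k) * card T" for k
    by (rule card_products_le_transversal[OF T(1-3) S S'(1) _ closed])
  then have "card (products G S k) \<le> card T * (k + 1) ^ N" for k
    using N by (metis le_trans mult.commute mult_le_mono2)
  then show ?thesis by blast
qed

end

section \<open>Orbits of automorphisms and the coset dynamic\<close>

lemma finite_coset_space_elem: "finite A \<Longrightarrow> z \<in> coset_space G A \<Longrightarrow> finite z"
  by (auto simp: coset_space_def orb_def)

lemma AutoGroup_mult_apply:
  "a \<in> auto G \<Longrightarrow> b \<in> auto G \<Longrightarrow> x \<in> carrier G \<Longrightarrow> (a \<otimes>\<^bsub>AutoGroup G\<^esub> b) x = a (b x)"
  by (simp add: AutoGroup_def BijGroup_def compose_def auto_def)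

lemma (in monoid) multlist_mult:
  "set ws \<subseteq> carrier G \<Longrightarrow> a \<in> carrier G \<Longrightarrow> foldr (\<otimes>) ws a = foldr (\<otimes>) ws \<one> \<otimes> a"
  by (induction ws) (auto simp: m_assoc)

context group
begin

lemma auto_subgroup_hom: "subgroup A (AutoGroup G) \<Longrightarrow> a \<in> A \<Longrightarrow> a \<in> hom G G"
  using subgroup.subset by (fastforce simp: AutoGroup_def auto_def)

lemma auto_subgroup_mult_apply:
  "subgroup A (AutoGroup G) \<Longrightarrow> a \<in> A \<Longrightarrow> b \<in> A \<Longrightarrow> x \<in> carrier G \<Longrightarrow>
    (a \<otimes>\<^bsub>AutoGroup G\<^esub> b) x = a (b x)"
  using subgroup.subset by (fastforce simp: AutoGroup_def intro: AutoGroup_mult_apply)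

lemma orb_subset_carrier: "subgroup A (AutoGroup G) \<Longrightarrow> g \<in> carrier G \<Longrightarrow> orb A g \<subseteq> carrier G"
  using auto_subgroup_hom by (auto simp: orb_def hom_def)

lemma orb_self:
  assumes "subgroup A (AutoGroup G)" and g: "g \<in> carrier G"
  shows "g \<in> orb A g"
proof -
  have "(\<lambda>x\<in>carrier G. x) \<in> A"
    using subgroup.one_closed[OF assms(1)] by (simp add: AutoGroup_def BijGroup_def)
  then show ?thesis
    unfolding orb_def using g by (intro image_eqI[of _ _ "\<lambda>x\<in>carrier G. x"]) auto
qed

lemma orb_apply:
  assumes A: "subgroup A (AutoGroup G)" and b: "b \<in> A" and w: "w \<in> carrier G"
  shows "orb A (b w) = orb A w"
proof -
  interpret AG: group "AutoGroup G"
    by (rule AutoGroup)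
  have "a (b w) \<in> orb A w" if "a \<in> A" for a
    using auto_subgroup_mult_apply[OF A that b w] subgroup.m_closed[OF A that b]
    unfolding orb_def by (metis image_eqI)
  moreover have "a w \<in> orb A (b w)" if a: "a \<in> A" for a
  proof -
    have ib: "inv\<^bsub>AutoGroup G\<^esub> b \<in> A"
      using subgroup.m_inv_closed[OF A b] .
    have "a \<in> carrier (AutoGroup G)" "b \<in> carrier (AutoGroup G)"
      using a b subgroup.subset[OF A] by auto
    then have "a = (a \<otimes>\<^bsub>AutoGroup G\<^esub> inv\<^bsub>AutoGroup G\<^esub> b) \<otimes>\<^bsub>AutoGroup G\<^esub> b"
      by (simp add: AG.m_assoc)
    then have "a w = (a \<otimes>\<^bsub>AutoGroup G\<^esub> inv\<^bsub>AutoGroup G\<^esub> b) (b w)"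
      using auto_subgroup_mult_apply[OF A subgroup.m_closed[OF A a ib] b w] by simp
    then show ?thesis
      unfolding orb_def using subgroup.m_closed[OF A a ib] by blast
  qed
  ultimately show ?thesis
    unfolding orb_def by blast
qed

lemma coset_space_subset_carrier:
  "subgroup A (AutoGroup G) \<Longrightarrow> z \<in> coset_space G A \<Longrightarrow> z \<subseteq> carrier G"
  using orb_subset_carrier by (auto simp: coset_space_def)

lemma cmult_subset:
  assumes A: "subgroup A (AutoGroup G)" "finite A" and g0: "g0 \<in> carrier G"
    and z: "z \<in> coset_space G A"
  shows "set_mset (cmult G A (orb A g0) z) \<subseteq> {orb A (g0 \<otimes> s) | s. s \<in> z}"
proof
  interpret AG: group "AutoGroup G"
    by (rule AutoGroup)
  define g where "g = (SOME g. g \<in> carrier G \<and> orb A g = orb A g0)"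
  define h where "h = (SOME h. h \<in> carrier G \<and> orb A h = z)"
  have g: "g \<in> carrier G" "orb A g = orb A g0"
    using someI[of "\<lambda>g. g \<in> carrier G \<and> orb A g = orb A g0", OF conjI[OF g0 refl]]
    unfolding g_def by blast+
  have h: "h \<in> carrier G" "orb A h = z"
    using z someI_ex[of "\<lambda>h. h \<in> carrier G \<and> orb A h = z"]
    unfolding h_def coset_space_def by blast+
  fix x assume "x \<in> set_mset (cmult G A (orb A g0) z)"
  then obtain a where a: "a \<in> A" "x = orb A (g \<otimes> a h)"
    using A(2) unfolding cmult_def g_def h_def Let_def by auto
  obtain b where b: "b \<in> A" "g = b g0"
    using orb_self[OF A(1) g(1)] g(2) unfolding orb_def by blast
  \<comment> \<open>\<open>a h = b u\<close> with \<open>u \<in> z\<close>, so \<open>g \<otimes> a h = b (g0 \<otimes> u)\<close> lies in the orbit of \<open>g0 \<otimes> u\<close>\<close>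
  define u where "u = (inv\<^bsub>AutoGroup G\<^esub> b \<otimes>\<^bsub>AutoGroup G\<^esub> a) h"
  have invba: "inv\<^bsub>AutoGroup G\<^esub> b \<otimes>\<^bsub>AutoGroup G\<^esub> a \<in> A"
    using b(1) a(1) A(1) by (simp add: subgroup.m_closed subgroup.m_inv_closed)
  then have u: "u \<in> z" "u \<in> carrier G"
    using h orb_subset_carrier[OF A(1) h(1)] unfolding u_def orb_def by auto
  have "b u = (b \<otimes>\<^bsub>AutoGroup G\<^esub> (inv\<^bsub>AutoGroup G\<^esub> b \<otimes>\<^bsub>AutoGroup G\<^esub> a)) h"
    using auto_subgroup_mult_apply[OF A(1) b(1) invba h(1)] by (simp add: u_def)
  also have "\<dots> = a h"
  proof -
    have "a \<in> carrier (AutoGroup G)" "b \<in> carrier (AutoGroup G)"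
      using a(1) b(1) subgroup.subset[OF A(1)] by auto
    then show ?thesis
      by (simp flip: AG.m_assoc)
  qed
  finally have "g \<otimes> a h = b (g0 \<otimes> u)"
    using b hom_mult[OF auto_subgroup_hom[OF A(1) b(1)]] g0 u(2) by simp
  then have "x = orb A (g0 \<otimes> u)"
    using a(2) orb_apply[OF A(1) b(1)] g0 u(2) by simp
  then show "x \<in> {orb A (g0 \<otimes> s) | s. s \<in> z}"
    using u(1) by blast
qed

lemma dyn_iter_subset_products:
  assumes A: "subgroup A (AutoGroup G)" "finite A" and z: "z \<in> coset_space G A"
    and y0: "y0 \<in> carrier G"
  shows "set_mset (dyn_iter G A z r (orb A y0)) \<subseteq> (\<lambda>p. orb A (y0 \<otimes> p)) ` products G z r"
proof (induction r)
  case 0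
  have "\<one> \<in> products G z 0"
    unfolding products_def by force
  then show ?case
    using y0 by force
next
  case (Suc r)
  have zG: "z \<subseteq> carrier G"
    using coset_space_subset_carrier[OF A(1) z] .
  show ?case
  proof
    fix x' assume "x' \<in> set_mset (dyn_iter G A z (Suc r) (orb A y0))"
    then obtain x where x: "x \<in> set_mset (dyn_iter G A z r (orb A y0))" "x' \<in> set_mset (cmult G A x z)"
      by (auto simp: cmult_mset_def)
    then obtain ws where ws: "set ws \<subseteq> z" "length ws = r" "x = orb A (y0 \<otimes> foldr (\<otimes>) ws \<one>)"
      using Suc unfolding products_def by blast
    have p: "foldr (\<otimes>) ws \<one> \<in> carrier G"
      using ws(1) zG by (intro multlist_closed) auto
    obtain s where s: "s \<in> z" "x' = orb A (y0 \<otimes> foldr (\<otimes>) ws \<one> \<otimes> s)"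
      using cmult_subset[OF A _ z] x(2) y0 p unfolding ws(3) by blast
    have sG: "s \<in> carrier G"
      using zG s(1) by blast
    then have "foldr (\<otimes>) (ws @ [s]) \<one> = foldr (\<otimes>) ws \<one> \<otimes> s"
      using multlist_mult[of ws s] ws(1) zG by auto
    then have "y0 \<otimes> foldr (\<otimes>) ws \<one> \<otimes> s = y0 \<otimes> foldr (\<otimes>) (ws @ [s]) \<one>"
      using zG s(1) p y0 by (auto simp: m_assoc)
    moreover have "foldr (\<otimes>) (ws @ [s]) \<one> \<in> products G z (Suc r)"
      using ws s unfolding products_def by (intro image_eqI[of _ _ "ws @ [s]"]) auto
    ultimately show "x' \<in> (\<lambda>p. orb A (y0 \<otimes> p)) ` products G z (Suc r)"
      using s(2) by auto
  qed
qed

lemma growth_le_card_products: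
  assumes A: "subgroup A (AutoGroup G)" "finite A"
    and z: "z \<in> coset_space G A" and y: "y \<in> coset_space G A"
  shows "growth G A z y r \<le> card (products G z r)"
proof -
  obtain y0 where y0: "y0 \<in> carrier G" "y = orb A y0"
    using y unfolding coset_space_def by blast
  have "finite (products G z r)"
    using finite_products[OF finite_coset_space_elem[OF A(2) z]] .
  then have "card (set_mset (dyn_iter G A z r y)) \<le> card ((\<lambda>p. orb A (y0 \<otimes> p)) ` products G z r)"
    unfolding y0(2) using dyn_iter_subset_products[OF A z y0(1)] by (intro card_mono) auto
  also have "\<dots> \<le> card (products G z r)"
    by (rule card_image_le) fact
  finally show ?thesis
    unfolding growth_def .
qed

end

lemma nat_poly_bound_imp_real_poly_bound:
  assumes "\<forall>r. f r \<le> C * (r + 1) ^ N"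
  shows "\<exists>C' k. C' > 0 \<and> k > 0 \<and> (\<forall>r::nat. r \<ge> 1 \<longrightarrow> real (f r) \<le> C' * real r ^ k)"
proof (intro exI[of _ "real (C * 2 ^ N) + 1"] exI[of _ "N + 1"] conjI allI impI)
  fix r :: nat assume r: "1 \<le> r"
  have "f r \<le> C * (r + 1) ^ N"
    using assms by blast
  also have "\<dots> \<le> C * (2 * r) ^ N"
    using r by (intro mult_le_mono2 power_mono) auto
  also have "\<dots> \<le> C * 2 ^ N * r ^ (N + 1)"
    using r by (simp add: power_mult_distrib power_increasing)
  finally have "real (f r) \<le> real (C * 2 ^ N) * real r ^ (N + 1)"
    by (metis of_nat_le_iff of_nat_mult of_nat_power)
  also have "\<dots> \<le> (real (C * 2 ^ N) + 1) * real r ^ (N + 1)"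
    by (intro mult_right_mono) auto
  finally show "real (f r) \<le> (real (C * 2 ^ N) + 1) * real r ^ (N + 1)" .
qed (auto intro!: add_nonneg_pos)

theorem mainTheorem3:
  fixes G :: "('a, 'b) monoid_scheme" and A :: "('a \<Rightarrow> 'a) set" and n :: nat
  assumes "group G"
    and "fin_gen_group G"
    and "virtually_nilpotent G"
    and "subgroup A (AutoGroup G)"
    and "finite A" and "card A = n"
    and "z \<in> coset_space G A" and "y \<in> coset_space G A"
  shows "\<exists>C k. C > 0 \<and> k > 0 \<and>
           (\<forall>r::nat. r \<ge> 1 \<longrightarrow> real (growth G A z y r) \<le> C * real r ^ k)"
proof -
  have A: "subgroup A (AutoGroup G)" "finite A"
    using assms(4,5) .
  have z: "z \<subseteq> carrier G" "finite z"
    using group.coset_space_subset_carrier[OF assms(1) A(1) assms(7)]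
      finite_coset_space_elem[OF A(2) assms(7)] .
  obtain C N where "\<forall>k. card (products G z k) \<le> C * (k + 1) ^ N"
    using group.virtually_nilpotent_card_products_le[OF assms(1,3) z] by blast
  then have "\<forall>r. growth G A z y r \<le> C * (r + 1) ^ N"
    using group.growth_le_card_products[OF assms(1) A assms(7,8)] le_trans by blast
  then show ?thesis
    by (rule nat_poly_bound_imp_real_poly_bound)
qed

end
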